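(* For positive integers $a,b,n$ and nonnegative integers $c$ and $k\le n$, $$\Psi_n(k,a,b,c)=\Psi_n(n-k,b+1,a-1,c).$$
   Context: All constant terms are taken with $\operatorname{CT}_x=\operatorname{CT}_{x_n}\cdots\operatorname{CT}_{x_1}$ (iterated constant-term extraction), where $(1-x_i)^{-b}$ and $x_i/(1-x_i)$ are expanded as power series in $x_i$, and for $i<j$, $(x_j-x_i)^{-c}=x_j^{-c}(1-x_i/x_j)^{-c}$ is expanded as a power series in $x_i/x_j$. $$\Psi_n(k,a,b,c):=\operatorname{CT}_x[t^k]\prod_{i=1}^n(1-x_i)^{-b}x_i^{-a+1}\Big(1+t\frac{x_i}{1-x_i}\Big)\prod_{1\le i<j\le n}(x_j-x_i)^{-c},$$ with $[t^k]$ the coefficient of $t^k$ (the definition makes sense for any integers $a,b$). *)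

theory Defs
  imports Complex_Main
begin

text \<open>Iterated constant term Psi_n(k,a,b,c), written out as the coefficient
extraction from the literal expansion of every factor (variables indexed 0..n-1,
x_0 << x_1 << ... ).
  r i : exponent taken from (1 - x_i)^(-b) = sum_r (-1)^r ((-b) gchoose r) x_i^r
  s i : exponent taken from (1 + t x_i/(1-x_i)) = 1 + sum_(s>=1) t x_i^s
        (s i = 0 means the term 1; s i > 0 contributes one factor t)
  p i j (i<j) : exponent from (x_j - x_i)^(-c) = x_j^(-c) sum_p (-1)^p ((-c) gchoose p) (x_i/x_j)^p
The coefficient of t^k forces exactly k indices with s i > 0; the constant term
forces the total exponent of every x_l to vanish.\<close>

definition Psi_terms :: "nat \<Rightarrow> nat \<Rightarrow> int \<Rightarrow> nat \<Rightarrow>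
    ((nat \<Rightarrow> nat) \<times> (nat \<Rightarrow> nat) \<times> (nat \<Rightarrow> nat \<Rightarrow> nat)) set" where
  "Psi_terms n k a c = {(r, s, p).
     (\<forall>i. n \<le> i \<longrightarrow> r i = 0 \<and> s i = 0) \<and>
     (\<forall>i j. \<not> (i < j \<and> j < n) \<longrightarrow> p i j = 0) \<and>
     card {i \<in> {..<n}. s i > 0} = k \<and>
     (\<forall>l<n. 1 - a + int (r l) + int (s l) + (\<Sum>j\<in>{l<..<n}. int (p l j))
              - (\<Sum>i<l. int c + int (p i l)) = 0)}"

definition Psi :: "nat \<Rightarrow> nat \<Rightarrow> int \<Rightarrow> int \<Rightarrow> nat \<Rightarrow> real" where
  "Psi n k a b c =
     (\<Sum>(r, s, p) \<in> Psi_terms n k a c.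
        (\<Prod>i<n. (-1) ^ r i * ((- of_int b :: real) gchoose r i)) *
        (\<Prod>j<n. \<Prod>i<j. (-1) ^ p i j * ((- of_nat c :: real) gchoose p i j)))"

end

(*
  For a set S of k indices carrying the factor t x/(1 - x), the corresponding part of
  Psi_n(k,a,b,c) is the constant term of prod_l x_l^(e_l) (1 - x_l)^(g_l) times
  prod_(i<j) (x_j - x_i)^(-c), with (e_l, g_l) = (2 - a, -b - 1) on S and (1 - a, -b) off S.

  Expanding in the smallest variable and resumming with Vandermonde's identity shows, by
  induction on n, that this constant term only changes by a sign when every g_l is replaced
  by c(n - 1) - 1 - e_l - g_l. Here all new exponents equal d = c(n - 1) + a + b - 2.
  The substitution x_l -> 1/x_(n-1-l), with (1 - 1/x)^d = (-1)^d x^(-d) (1 - x)^d, then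
  produces the exponents belonging to the parameters (b + 1, a - 1) and the reflected
  complement of S, a set of size n - k; the signs cancel.
*)

theory Submission
  imports Defs "HOL-Computational_Algebra.Formal_Power_Series"
begin

definition Pi0 :: "nat \<Rightarrow> (nat \<Rightarrow> 'a set) \<Rightarrow> (nat \<Rightarrow> 'a::zero) set" where
  "Pi0 n X = {u. (\<forall>l<n. u l \<in> X l) \<and> (\<forall>l. n \<le> l \<longrightarrow> u l = 0)}"

abbreviation Box :: "nat \<Rightarrow> nat \<Rightarrow> (nat \<Rightarrow> nat) set" where
  "Box m K \<equiv> Pi0 m (\<lambda>_. {..K})"

lemma Pi0_0: "Pi0 0 X = {\<lambda>_. 0}"
  by (auto simp: Pi0_def)

lemma Pi0_Suc: "Pi0 (Suc m) X = (\<lambda>(u, v). u(m := v)) ` (Pi0 m X \<times> X m)"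
proof (rule set_eqI, rule iffI)
  fix w assume w: "w \<in> Pi0 (Suc m) X"
  have "w = (\<lambda>(u, v). u(m := v)) (w(m := 0), w m)" by auto
  moreover have "(w(m := 0), w m) \<in> Pi0 m X \<times> X m"
    using w by (auto simp: Pi0_def)
  ultimately show "w \<in> (\<lambda>(u, v). u(m := v)) ` (Pi0 m X \<times> X m)" by blast
qed (auto simp: Pi0_def less_Suc_eq)

lemma inj_on_Pi0_Suc: "inj_on (\<lambda>(u, v). u(m := v)) (Pi0 m X \<times> X m)"
proof (rule inj_onI, clarsimp)
  fix u v u' v'
  assume "u \<in> Pi0 m X" "u' \<in> Pi0 m X" and eq: "u(m := v) = u'(m := v')"
  have "u x = u' x" for x
    by (cases "x = m") (use fun_cong[OF eq, of x] \<open>u \<in> Pi0 m X\<close> \<open>u' \<in> Pi0 m X\<close> in \<open>auto simp: Pi0_def\<close>)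
  then show "u = u' \<and> v = v'"
    using fun_cong[OF eq, of m] by auto
qed

lemma sum_Pi0_Suc:
  "(\<Sum>u\<in>Pi0 (Suc m) X. g u) = (\<Sum>u\<in>Pi0 m X. \<Sum>v\<in>X m. g (u(m := v)))"
  unfolding Pi0_Suc sum.reindex[OF inj_on_Pi0_Suc]
  by (simp add: sum.cartesian_product' comp_def)

lemma finite_Pi0: "(\<And>l. l < n \<Longrightarrow> finite (X l)) \<Longrightarrow> finite (Pi0 n X)"
  by (induction n) (simp_all add: Pi0_0 Pi0_Suc)

lemma sum_prod_Pi0:
  fixes f :: "nat \<Rightarrow> 'a::zero \<Rightarrow> 'b::comm_semiring_1"
  shows "(\<Sum>u\<in>Pi0 n X. \<Prod>l<n. f l (u l)) = (\<Prod>l<n. \<Sum>v\<in>X l. f l v)"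
proof (induction n)
  case (Suc m)
  have "(\<Sum>u\<in>Pi0 (Suc m) X. \<Prod>l<Suc m. f l (u l))
      = (\<Sum>u\<in>Pi0 m X. \<Sum>v\<in>X m. (\<Prod>l<m. f l (u l)) * f m v)"
    unfolding sum_Pi0_Suc
    by (intro sum.cong refl) (auto simp: Pi0_def lessThan_Suc mult.commute intro!: prod.cong)
  also have "\<dots> = (\<Prod>l<Suc m. \<Sum>v\<in>X l. f l v)"
    unfolding sum_product[symmetric] Suc.IH by simp
  finally show ?case .
qed (simp add: Pi0_0)

lemma Box_le: "q \<in> Box m K \<Longrightarrow> q l \<le> K"
  by (cases "l < m") (auto simp: Pi0_def)

lemma Box_outside: "q \<in> Box m K \<Longrightarrow> m \<le> l \<Longrightarrow> q l = 0"
  by (simp add: Pi0_def)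

lemma not_in_Box_iff:
  assumes "\<forall>l\<ge>m. q l = 0"
  shows "q \<notin> Box m K \<longleftrightarrow> (\<exists>l<m. K < q l)"
  using assms by (auto simp: Pi0_def not_le)

lemma sum_le_imp_Box:
  assumes "\<forall>l\<ge>m. q l = 0" and "(\<Sum>l<m. q l) \<le> K"
  shows "q \<in> Box m K"
proof -
  have "q l \<le> K" if "l < m" for l
    using member_le_sum[of l "{..<m}" q] that assms(2) by simp
  then show ?thesis using assms(1) by (auto simp: Pi0_def)
qed

lemma minus_one_powi_add: "(-1 :: 'a :: field) powi (m + n) = (-1) powi m * (-1) powi n"
  by (simp add: power_int_add)

lemma minus_one_powi_diff: "(-1 :: 'a :: field) powi (m - n) = (-1) powi m * (-1) powi n"
  using minus_one_powi_add[of m "- n"] by (simp add: power_int_minus_one_minus)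

lemma minus_one_powi_eq: "even (m - n) \<Longrightarrow> (-1 :: 'a :: field) powi m = (-1) powi n"
  by (auto simp: power_int_minus_left elim: evenE oddE)

lemma Suc_choose_two: "Suc m choose 2 = m + (m choose 2)"
  by (simp add: numeral_2_eq_2)

text \<open>\<open>negbin c q\<close> is the coefficient of \<open>y ^ q\<close> in \<open>(1 - y) powi (- c)\<close>.\<close>

definition negbin :: "nat \<Rightarrow> nat \<Rightarrow> real" where
  "negbin c q = (-1) ^ q * ((- of_nat c) gchoose q)"

lemma negbin_eq_binomial: "negbin c q = of_nat ((q + c - 1) choose q)"
proof -
  have "negbin c q = (of_nat (q + c) - 1 gchoose q)"
    unfolding negbin_def by (subst gbinomial_negated_upper) (simp flip: power_mult_distrib)
  also have "\<dots> = of_nat ((q + c - 1) choose q)"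
  proof (cases "q + c = 0")
    case False
    then have "1 \<le> q + c" by linarith
    then have "(of_nat (q + c) - 1 :: real) = of_nat (q + c - 1)" by (simp add: of_nat_diff)
    then show ?thesis by (simp only: binomial_gbinomial)
  qed simp
  finally show ?thesis .
qed

lemma negbin_0: "negbin 0 q = (if q = 0 then 1 else 0)"
  by (cases q) (auto simp: negbin_eq_binomial)

lemma negbin_add_mult_binomial:
  "negbin c (q + u) * of_nat ((q + u) choose u) = negbin c q * negbin (c + q) u"
proof (cases "c = 0")
  case True
  then show ?thesis by (cases q; cases u) (auto simp: negbin_eq_binomial binomial_eq_0)
next
  case False
  have "((q + u + c - 1) choose (q + u)) * ((q + u) choose u) =
      ((q + c - 1) choose q) * ((u + (c + q) - 1) choose u)"
    using choose_mult[of u "q + u" "q + u + c - 1"] False by (simp add: ac_simps)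
  then show ?thesis
    unfolding negbin_eq_binomial by (metis (mono_tags) add.commute of_nat_mult)
qed

lemma negbin_add: "negbin (c + d) s = (\<Sum>u\<le>s. negbin c u * negbin d (s - u))"
proof -
  have "(- of_nat (c + d) gchoose s :: real) =
      (\<Sum>u\<le>s. ((- of_nat c) gchoose u) * ((- of_nat d) gchoose (s - u)))"
    using gbinomial_Vandermonde[of "- of_nat c :: real" "- of_nat d" s]
    by (simp add: atLeast0AtMost)
  then have "negbin (c + d) s = (\<Sum>u\<le>s. (-1) ^ s * (((- of_nat c) gchoose u) * ((- of_nat d) gchoose (s - u))))"
    by (simp add: negbin_def sum_distrib_left)
  also have "\<dots> = (\<Sum>u\<le>s. negbin c u * negbin d (s - u))"
  proof (intro sum.cong refl)
    fix u assume "u \<in> {..s}"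
    then have "(-1::real) ^ s = (-1) ^ u * (-1) ^ (s - u)" by (simp flip: power_add)
    then show "(-1) ^ s * (((- of_nat c) gchoose u) * ((- of_nat d) gchoose (s - u))) =
        negbin c u * negbin d (s - u)"
      by (simp add: negbin_def)
  qed
  finally show ?thesis .
qed

text \<open>\<open>Bcoeff e g x\<close> is the coefficient of \<open>y ^ x\<close> in \<open>y powi e * (1 - y) powi g\<close>.\<close>

definition Bcoeff :: "int \<Rightarrow> int \<Rightarrow> int \<Rightarrow> real" where
  "Bcoeff e g x = (if e \<le> x then (-1) ^ nat (x - e) * (of_int g gchoose nat (x - e)) else 0)"

lemma Bcoeff_below: "x < e \<Longrightarrow> Bcoeff e g x = 0"
  by (simp add: Bcoeff_def)

lemma Bcoeff_shift: "Bcoeff e g (x + s) = Bcoeff (e - s) g x"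
  by (simp add: Bcoeff_def algebra_simps)

lemma Bcoeff_add_expand:
  "Bcoeff e (g + int q) x = (\<Sum>u\<le>q. (-1) ^ u * of_nat (q choose u) * Bcoeff (e + int u) g x)"
proof (cases "e \<le> x")
  case True
  define N where "N = nat (x - e)"
  have xN: "x = e + int N" using True by (simp add: N_def)
  define f where "f u = (-1::real) ^ N * (of_nat (q choose u) * (of_int g gchoose (N - u)))" for u
  have "Bcoeff e (g + int q) x = (-1) ^ N * ((of_nat q + of_int g) gchoose N)"
    by (simp add: Bcoeff_def xN add.commute)
  also have "\<dots> = (\<Sum>u\<le>N. f u)"
    unfolding gbinomial_Vandermonde[symmetric] f_def atLeast0AtMost
    by (simp add: sum_distrib_left binomial_gbinomial)
  also have "\<dots> = (\<Sum>u\<le>min q N. f u)"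
    by (rule sum.mono_neutral_right) (auto simp: f_def)
  also have "\<dots> = (\<Sum>u\<le>q. (-1) ^ u * of_nat (q choose u) * Bcoeff (e + int u) g x)"
  proof (rule sum.mono_neutral_cong_left)
    fix u assume u: "u \<in> {..min q N}"
    then have "(-1::real) ^ N = (-1) ^ u * (-1) ^ (N - u)" by (simp flip: power_add)
    moreover have "nat (x - (e + int u)) = N - u" using u by (simp add: xN)
    ultimately show "f u = (-1) ^ u * of_nat (q choose u) * Bcoeff (e + int u) g x"
      using u by (simp add: f_def Bcoeff_def xN)
  qed (auto simp: Bcoeff_def xN)
  finally show ?thesis .
qed (simp add: Bcoeff_def)

lemma Bcoeff_reflect: "Bcoeff e (int d) (C - x) = (-1) ^ d * Bcoeff (C - e - int d) (int d) x"
proof -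
  define k where "k = C - x - e"
  consider "k < 0" | "int d < k" | "0 \<le> k \<and> k \<le> int d" by linarith
  then show ?thesis
  proof cases
    case 1
    then have "d < nat (x - (C - e - int d))" by (simp add: k_def)
    then show ?thesis using 1 by (simp add: Bcoeff_def k_def binomial_gbinomial[symmetric] binomial_eq_0)
  next
    case 2
    then have "d < nat (C - x - e)" by (simp add: k_def)
    then show ?thesis using 2 by (simp add: Bcoeff_def k_def binomial_gbinomial[symmetric] binomial_eq_0)
  next
    case 3
    then obtain j where j: "k = int j" "j \<le> d" by (metis nonneg_int_cases of_nat_le_iff)
    have "nat (C - x - e) = j" "nat (x - (C - e - int d)) = d - j" using j by (auto simp: k_def)
    moreover have "(-1::real) ^ j = (-1) ^ d * (-1) ^ (d - j)"
      using j(2) by (simp add: power_diff_conv_inverse)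
    moreover have "(d choose j) = (d choose (d - j))" using j(2) by (rule binomial_symmetric)
    ultimately show ?thesis using 3 j
      by (simp add: Bcoeff_def k_def binomial_gbinomial[symmetric])
  qed
qed

text \<open>\<open>y * (1 - y) powi (g - 1) = (\<Sum>v\<ge>1. y ^ v) * (1 - y) powi g\<close>\<close>

lemma Bcoeff_geometric:
  assumes "0 \<le> x"
  shows "Bcoeff 1 (g - 1) x = (\<Sum>v\<in>{1..nat x}. Bcoeff 0 g (x - int v))"
proof -
  obtain N where x: "x = int N" using assms nonneg_int_cases by blast
  show ?thesis
  proof (cases N)
    case (Suc M)
    have "(\<Sum>v\<in>{1..N}. Bcoeff 0 g (x - int v)) = (\<Sum>v\<in>{1..N}. (of_int g gchoose (N - v)) * (-1) ^ (N - v))"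
    proof (intro sum.cong refl)
      fix v assume "v \<in> {1..N}"
      then have "x - int v = int (N - v)" by (simp add: x of_nat_diff)
      then show "Bcoeff 0 g (x - int v) = (of_int g gchoose (N - v)) * (-1) ^ (N - v)"
        by (simp add: Bcoeff_def)
    qed
    also have "\<dots> = (\<Sum>r\<le>M. (of_int g gchoose r) * (-1) ^ r)"
      by (rule sum.reindex_bij_witness[where i="\<lambda>r. N - r" and j="\<lambda>v. N - v"]) (auto simp: Suc)
    also have "\<dots> = (-1) ^ M * ((of_int g - 1) gchoose M)"
      by (rule gbinomial_sum_lower_neg)
    also have "\<dots> = Bcoeff 1 (g - 1) x"
      by (simp add: Bcoeff_def x Suc)
    finally show ?thesis by (simp add: x)
  qed (simp add: Bcoeff_def x)
qed

section \<open>Constant terms against \<open>\<Prod>i<j. (x\<^sub>j - x\<^sub>i) powi (- c)\<close>\<close>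

definition tri_arrays :: "nat \<Rightarrow> (nat \<Rightarrow> nat \<Rightarrow> nat) set" where
  "tri_arrays n = {p. \<forall>i j. \<not> (i < j \<and> j < n) \<longrightarrow> p i j = 0}"

text \<open>Choosing the term \<open>(x\<^sub>i / x\<^sub>j) ^ p i j\<close> of every factor
  \<open>(x\<^sub>j - x\<^sub>i) powi (- c) = x\<^sub>j powi (- c) * (1 - x\<^sub>i / x\<^sub>j) powi (- c)\<close> leaves
  \<open>x\<^sub>l powi (- cancel_exp n c p l)\<close>, which the factor in \<open>x\<^sub>l\<close> alone has to cancel.\<close>

definition cancel_exp :: "nat \<Rightarrow> nat \<Rightarrow> (nat \<Rightarrow> nat \<Rightarrow> nat) \<Rightarrow> nat \<Rightarrow> int" where
  "cancel_exp n c p l = (\<Sum>i<l. int c + int (p i l)) - (\<Sum>j\<in>{l<..<n}. int (p l j))"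

definition array_weight :: "nat \<Rightarrow> nat \<Rightarrow> (nat \<Rightarrow> nat \<Rightarrow> nat) \<Rightarrow> real" where
  "array_weight n c p = (\<Prod>j<n. \<Prod>i<j. negbin c (p i j))"

definition ct_term :: "nat \<Rightarrow> nat \<Rightarrow> (nat \<Rightarrow> int \<Rightarrow> real) \<Rightarrow> (nat \<Rightarrow> nat \<Rightarrow> nat) \<Rightarrow> real" where
  "ct_term n c F p = array_weight n c p * (\<Prod>l<n. F l (cancel_exp n c p l))"

text \<open>\<open>ct n c F\<close> is the constant term of \<open>(\<Prod>l<n. f\<^sub>l x\<^sub>l) * (\<Prod>i<j<n. (x\<^sub>j - x\<^sub>i) powi (- c))\<close>,
  where \<open>F l x\<close> is the coefficient of \<open>x\<^sub>l ^ x\<close> in \<open>f\<^sub>l\<close>. It is only meaningful if every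
  \<open>F l\<close> vanishes below some bound, which makes the support of the sum finite
  (see \<open>ct_eq_sum_bounded_arrays\<close>); otherwise the sum is infinite and defaults to 0.\<close>

definition ct :: "nat \<Rightarrow> nat \<Rightarrow> (nat \<Rightarrow> int \<Rightarrow> real) \<Rightarrow> real" where
  "ct n c F = (\<Sum>p \<in> {p \<in> tri_arrays n. ct_term n c F p \<noteq> 0}. ct_term n c F p)"

definition bounded_arrays :: "nat \<Rightarrow> nat \<Rightarrow> (nat \<Rightarrow> int) \<Rightarrow> (nat \<Rightarrow> nat \<Rightarrow> nat) set" where
  "bounded_arrays n c A = {p \<in> tri_arrays n. \<forall>l<n. A l \<le> cancel_exp n c p l}"

lemma tri_arrays_0: "tri_arrays 0 = {\<lambda>_ _. 0}"
  by (auto simp: tri_arrays_def)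

definition cons_row :: "nat \<Rightarrow> (nat \<Rightarrow> nat) \<Rightarrow> (nat \<Rightarrow> nat \<Rightarrow> nat) \<Rightarrow> nat \<Rightarrow> nat \<Rightarrow> nat" where
  "cons_row m q p = (\<lambda>i j. if i = 0 then (if 0 < j \<and> j \<le> m then q (j - 1) else 0)
                          else p (i - 1) (j - 1))"

definition hd_row :: "nat \<Rightarrow> (nat \<Rightarrow> nat \<Rightarrow> nat) \<Rightarrow> nat \<Rightarrow> nat" where
  "hd_row m p = (\<lambda>j. if j < m then p 0 (Suc j) else 0)"

definition tl_rows :: "(nat \<Rightarrow> nat \<Rightarrow> nat) \<Rightarrow> nat \<Rightarrow> nat \<Rightarrow> nat" where
  "tl_rows p = (\<lambda>i j. p (Suc i) (Suc j))"

lemma cons_row_in_tri_arrays: "p \<in> tri_arrays m \<Longrightarrow> cons_row m q p \<in> tri_arrays (Suc m)"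
  unfolding tri_arrays_def cons_row_def
  by (auto simp: less_diff_conv2)

lemma cons_row_hd_tl:
  assumes "p \<in> tri_arrays (Suc m)"
  shows "cons_row m (hd_row m p) (tl_rows p) = p" and "tl_rows p \<in> tri_arrays m"
proof -
  show "cons_row m (hd_row m p) (tl_rows p) = p"
  proof (intro ext)
    fix i j
    show "cons_row m (hd_row m p) (tl_rows p) i j = p i j"
      using assms unfolding cons_row_def hd_row_def tl_rows_def tri_arrays_def
      by (cases i; cases j) auto
  qed
  show "tl_rows p \<in> tri_arrays m" using assms unfolding tri_arrays_def tl_rows_def by auto
qed

lemma cons_row_inject:
  assumes "\<forall>j\<ge>m. q j = 0" "\<forall>j\<ge>m. q' j = 0" and "cons_row m q p = cons_row m q' p'"
  shows "q = q' \<and> p = p'"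
proof
  show "q = q'"
  proof
    fix j
    show "q j = q' j"
      using fun_cong[OF fun_cong[OF assms(3), of 0], of "Suc j"] assms(1,2)
      by (cases "j < m") (auto simp: cons_row_def)
  qed
  show "p = p'"
  proof (intro ext)
    fix i j
    show "p i j = p' i j"
      using fun_cong[OF fun_cong[OF assms(3), of "Suc i"], of "Suc j"] by (simp add: cons_row_def)
  qed
qed

lemma array_weight_cons_row:
  "array_weight (Suc m) c (cons_row m q p) = (\<Prod>j<m. negbin c (q j)) * array_weight m c p"
proof -
  have "array_weight (Suc m) c (cons_row m q p) =
      (\<Prod>j<m. \<Prod>i<Suc j. negbin c (cons_row m q p i (Suc j)))"
    unfolding array_weight_def by (subst prod.lessThan_Suc_shift) simp
  also have "\<dots> = (\<Prod>j<m. negbin c (q j) * (\<Prod>i<j. negbin c (p i j)))"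
    by (intro prod.cong refl, subst prod.lessThan_Suc_shift) (simp add: cons_row_def)
  finally show ?thesis by (simp add: prod.distrib array_weight_def)
qed

lemma cancel_exp_cons_row_0: "cancel_exp (Suc m) c (cons_row m q p) 0 = - int (\<Sum>j<m. q j)"
proof -
  have "(\<Sum>j\<in>{0<..<Suc m}. int (cons_row m q p 0 j)) = (\<Sum>j\<in>{0..<m}. int (cons_row m q p 0 (Suc j)))"
    by (subst sum.shift_bounds_Suc_ivl[symmetric]) (simp add: greaterThanLessThan_eq atLeastSucLessThan_greaterThanLessThan)
  also have "\<dots> = (\<Sum>j<m. int (q j))"
    by (intro sum.cong) (auto simp: cons_row_def)
  finally show ?thesis by (simp add: cancel_exp_def)
qed

lemma cancel_exp_cons_row_Suc:
  assumes "l < m"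
  shows "cancel_exp (Suc m) c (cons_row m q p) (Suc l) = int c + int (q l) + cancel_exp m c p l"
proof -
  have "(\<Sum>i<Suc l. int c + int (cons_row m q p i (Suc l))) = int c + int (q l) + (\<Sum>i<l. int c + int (p i l))"
    using assms by (subst sum.lessThan_Suc_shift) (simp add: cons_row_def)
  moreover have "(\<Sum>j\<in>{Suc l<..<Suc m}. int (cons_row m q p (Suc l) j)) = (\<Sum>j\<in>{l<..<m}. int (p l j))"
    unfolding atLeastSucLessThan_greaterThanLessThan[symmetric] sum.shift_bounds_Suc_ivl
    by (simp add: cons_row_def)
  ultimately show ?thesis by (simp add: cancel_exp_def)
qed

lemma ct_term_cons_row:
  "ct_term (Suc m) c F (cons_row m q p) =
     (\<Prod>j<m. negbin c (q j)) * F 0 (- int (\<Sum>j<m. q j)) *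
     ct_term m c (\<lambda>l x. F (Suc l) (x + int c + int (q l))) p"
proof -
  have "(\<Prod>l<m. F (Suc l) (cancel_exp (Suc m) c (cons_row m q p) (Suc l))) =
      (\<Prod>l<m. F (Suc l) (cancel_exp m c p l + int c + int (q l)))"
    by (intro prod.cong refl) (simp add: cancel_exp_cons_row_Suc add_ac)
  then show ?thesis
    unfolding ct_term_def array_weight_cons_row
    by (simp add: prod.lessThan_Suc_shift cancel_exp_cons_row_0 ac_simps del: prod.lessThan_Suc)
qed

lemma bounded_arrays_Suc:
  assumes "- A 0 \<le> int K"
  shows "bounded_arrays (Suc m) c A = (\<lambda>(q, p). cons_row m q p) `
     (SIGMA q:{q \<in> Box m K. A 0 \<le> - int (\<Sum>j<m. q j)}.
        bounded_arrays m c (\<lambda>l. A (Suc l) - int c - int (q l)))"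
proof (rule set_eqI, rule iffI)
  fix p assume p: "p \<in> bounded_arrays (Suc m) c A"
  then have p_tri: "p \<in> tri_arrays (Suc m)" by (simp add: bounded_arrays_def)
  define q where "q = hd_row m p"
  define p' where "p' = tl_rows p"
  have p_eq: "p = cons_row m q p'" and p'_tri: "p' \<in> tri_arrays m"
    using cons_row_hd_tl[OF p_tri] by (simp_all add: q_def p'_def)
  have "A 0 \<le> cancel_exp (Suc m) c p 0" using p by (simp add: bounded_arrays_def)
  then have sum_q: "A 0 \<le> - int (\<Sum>j<m. q j)" by (simp add: p_eq cancel_exp_cons_row_0)
  have "(\<Sum>j<m. q j) \<le> K" using sum_q assms by linarith
  then have "q \<in> Box m K" by (intro sum_le_imp_Box) (auto simp: q_def hd_row_def)
  moreover have "p' \<in> bounded_arrays m c (\<lambda>l. A (Suc l) - int c - int (q l))"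
    using p p'_tri by (auto simp: bounded_arrays_def p_eq cancel_exp_cons_row_Suc)
  ultimately show "p \<in> (\<lambda>(q, p). cons_row m q p) `
      (SIGMA q:{q \<in> Box m K. A 0 \<le> - int (\<Sum>j<m. q j)}.
        bounded_arrays m c (\<lambda>l. A (Suc l) - int c - int (q l)))"
    using p_eq sum_q by blast
next
  fix p assume "p \<in> (\<lambda>(q, p). cons_row m q p) `
      (SIGMA q:{q \<in> Box m K. A 0 \<le> - int (\<Sum>j<m. q j)}.
        bounded_arrays m c (\<lambda>l. A (Suc l) - int c - int (q l)))"
  then obtain q p' where p_eq: "p = cons_row m q p'" and sum_q: "A 0 \<le> - int (\<Sum>j<m. q j)"
    and p': "p' \<in> bounded_arrays m c (\<lambda>l. A (Suc l) - int c - int (q l))" by auto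
  have "A l \<le> cancel_exp (Suc m) c p l" if "l < Suc m" for l
    using that p' sum_q
    by (cases l) (auto simp: p_eq bounded_arrays_def cancel_exp_cons_row_0 cancel_exp_cons_row_Suc)
  then show "p \<in> bounded_arrays (Suc m) c A"
    using p' cons_row_in_tri_arrays by (auto simp: p_eq bounded_arrays_def)
qed

lemma inj_on_cons_row: "inj_on (\<lambda>(q, p). cons_row m q p) (SIGMA q:{q \<in> Box m K. P q}. Q q)"
  by (rule inj_onI) (auto dest!: cons_row_inject[rotated 2] simp: Box_outside)

lemma finite_bounded_arrays: "finite (bounded_arrays n c A)"
proof (induction n arbitrary: A)
  case 0
  then show ?case
    using finite_subset[of "bounded_arrays 0 c A" "tri_arrays 0"]
    by (auto simp: bounded_arrays_def tri_arrays_0)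
next
  case (Suc m)
  have "finite (Box m (nat (- A 0)))" by (rule finite_Pi0) simp
  then show ?case
    using Suc.IH by (simp add: bounded_arrays_Suc[where K = "nat (- A 0)"])
qed

lemma ct_eq_sum_bounded_arrays:
  assumes "\<And>l x. l < n \<Longrightarrow> x < A l \<Longrightarrow> F l x = 0"
  shows "ct n c F = (\<Sum>p\<in>bounded_arrays n c A. ct_term n c F p)"
  unfolding ct_def
proof (rule sum.mono_neutral_left[OF finite_bounded_arrays])
  show "{p \<in> tri_arrays n. ct_term n c F p \<noteq> 0} \<subseteq> bounded_arrays n c A"
    using assms by (force simp: ct_term_def bounded_arrays_def not_le)
qed (auto simp: bounded_arrays_def)

lemma ct_cong: "(\<And>l x. l < n \<Longrightarrow> F l x = G l x) \<Longrightarrow> ct n c F = ct n c G"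
  by (simp add: ct_def ct_term_def)

lemma ct_0: "ct 0 c F = 1"
  by (simp add: ct_def ct_term_def array_weight_def tri_arrays_0)

lemma ct_scale:
  assumes "\<And>l. l < n \<Longrightarrow> \<kappa> l \<noteq> 0"
  shows "ct n c (\<lambda>l x. \<kappa> l * F l x) = (\<Prod>l<n. \<kappa> l) * ct n c F"
proof -
  have "ct_term n c (\<lambda>l x. \<kappa> l * F l x) p = (\<Prod>l<n. \<kappa> l) * ct_term n c F p" for p
    by (simp add: ct_term_def prod.distrib ac_simps)
  moreover have "(\<Prod>l<n. \<kappa> l) \<noteq> 0" using assms by simp
  ultimately show ?thesis by (simp add: ct_def sum_distrib_left)
qed

text \<open>Expansion along \<open>x\<^sub>0\<close>: the row \<open>q\<close> of exponents taken from the factors \<open>(x\<^sub>j - x\<^sub>0) powi (- c)\<close>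
  shifts the remaining coefficient sequences.\<close>

lemma ct_Suc:
  assumes K: "- A 0 \<le> int K" and F: "\<And>l x. l < Suc m \<Longrightarrow> x < A l \<Longrightarrow> F l x = 0"
  shows "ct (Suc m) c F = (\<Sum>q\<in>Box m K. (\<Prod>j<m. negbin c (q j)) * F 0 (- int (\<Sum>j<m. q j)) *
            ct m c (\<lambda>l x. F (Suc l) (x + int c + int (q l))))"
proof -
  let ?S = "{q \<in> Box m K. A 0 \<le> - int (\<Sum>j<m. q j)}"
  let ?A = "\<lambda>q l. A (Suc l) - int c - int (q l)"
  let ?F = "\<lambda>q l x. F (Suc l) (x + int c + int (q l))"
  have fin: "finite (Box m K)" by (rule finite_Pi0) simp
  have "ct (Suc m) c F = (\<Sum>p\<in>bounded_arrays (Suc m) c A. ct_term (Suc m) c F p)"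
    using F by (rule ct_eq_sum_bounded_arrays)
  also have "\<dots> = (\<Sum>(q, p)\<in>(SIGMA q:?S. bounded_arrays m c (?A q)). ct_term (Suc m) c F (cons_row m q p))"
    unfolding bounded_arrays_Suc[where A = A and K = K, OF K] sum.reindex[OF inj_on_cons_row]
    by (simp add: case_prod_beta comp_def)
  also have "\<dots> = (\<Sum>q\<in>?S. \<Sum>p\<in>bounded_arrays m c (?A q). ct_term (Suc m) c F (cons_row m q p))"
    using fin by (subst sum.Sigma) (auto simp: finite_bounded_arrays)
  also have "\<dots> = (\<Sum>q\<in>?S. (\<Prod>j<m. negbin c (q j)) * F 0 (- int (\<Sum>j<m. q j)) * ct m c (?F q))"
  proof (intro sum.cong refl)
    fix q
    have "ct m c (?F q) = (\<Sum>p\<in>bounded_arrays m c (?A q). ct_term m c (?F q) p)"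
      by (rule ct_eq_sum_bounded_arrays) (simp add: F)
    then show "(\<Sum>p\<in>bounded_arrays m c (?A q). ct_term (Suc m) c F (cons_row m q p)) =
        (\<Prod>j<m. negbin c (q j)) * F 0 (- int (\<Sum>j<m. q j)) * ct m c (?F q)"
      by (simp add: ct_term_cons_row sum_distrib_left)
  qed
  also have "\<dots> = (\<Sum>q\<in>Box m K. (\<Prod>j<m. negbin c (q j)) * F 0 (- int (\<Sum>j<m. q j)) * ct m c (?F q))"
    using fin F by (intro sum.mono_neutral_left) auto
  finally show ?thesis .
qed

lemma ct_sum_expand:
  assumes "\<And>l v x. l < n \<Longrightarrow> v \<in> X l \<Longrightarrow> x < A l \<Longrightarrow> H l v x = 0"
  shows "ct n c (\<lambda>l x. \<Sum>v\<in>X l. \<alpha> l v * H l v x) =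
         (\<Sum>u\<in>Pi0 n X. (\<Prod>l<n. \<alpha> l (u l)) * ct n c (\<lambda>l. H l (u l)))"
proof -
  have "ct n c (\<lambda>l x. \<Sum>v\<in>X l. \<alpha> l v * H l v x) =
      (\<Sum>p\<in>bounded_arrays n c A. \<Sum>u\<in>Pi0 n X. (\<Prod>l<n. \<alpha> l (u l)) * ct_term n c (\<lambda>l. H l (u l)) p)"
    by (subst ct_eq_sum_bounded_arrays[where A = A])
      (auto simp: assms ct_term_def sum_prod_Pi0[symmetric] prod.distrib sum_distrib_left ac_simps)
  also have "\<dots> = (\<Sum>u\<in>Pi0 n X. (\<Prod>l<n. \<alpha> l (u l)) * ct n c (\<lambda>l. H l (u l)))"
  proof (subst sum.swap, intro sum.cong refl)
    fix u assume "u \<in> Pi0 n X"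
    then have "ct n c (\<lambda>l. H l (u l)) = (\<Sum>p\<in>bounded_arrays n c A. ct_term n c (\<lambda>l. H l (u l)) p)"
      by (intro ct_eq_sum_bounded_arrays) (auto simp: assms Pi0_def)
    then show "(\<Sum>p\<in>bounded_arrays n c A. (\<Prod>l<n. \<alpha> l (u l)) * ct_term n c (\<lambda>l. H l (u l)) p) =
        (\<Prod>l<n. \<alpha> l (u l)) * ct n c (\<lambda>l. H l (u l))"
      by (simp add: sum_distrib_left)
  qed
  finally show ?thesis .
qed

definition reverse_array :: "nat \<Rightarrow> (nat \<Rightarrow> nat \<Rightarrow> nat) \<Rightarrow> nat \<Rightarrow> nat \<Rightarrow> nat" where
  "reverse_array n p = (\<lambda>i j. if i < j \<and> j < n then p (n - 1 - j) (n - 1 - i) else 0)"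

lemma reverse_array_in_tri_arrays: "reverse_array n p \<in> tri_arrays n"
  by (simp add: reverse_array_def tri_arrays_def)

lemma reverse_reverse_array: "p \<in> tri_arrays n \<Longrightarrow> reverse_array n (reverse_array n p) = p"
  unfolding reverse_array_def tri_arrays_def by (intro ext) auto

lemma array_weight_eq_prod_pairs:
  "array_weight n c p = (\<Prod>(i, j)\<in>{(i, j). i < j \<and> j < n}. negbin c (p i j))"
proof -
  have "(\<Prod>(i, j)\<in>{(i, j). i < j \<and> j < n}. negbin c (p i j)) =
      (\<Prod>(j, i)\<in>(SIGMA j:{..<n}. {..<j}). negbin c (p i j))"
    by (rule prod.reindex_bij_witness[where i="\<lambda>(j, i). (i, j)" and j="\<lambda>(i, j). (j, i)"]) auto
  then show ?thesis by (simp add: array_weight_def prod.Sigma)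
qed

lemma array_weight_reverse_array: "array_weight n c (reverse_array n p) = array_weight n c p"
  unfolding array_weight_eq_prod_pairs
  by (rule prod.reindex_bij_witness[where i="\<lambda>(i, j). (n - 1 - j, n - 1 - i)"
        and j="\<lambda>(i, j). (n - 1 - j, n - 1 - i)"]) (auto simp: reverse_array_def)

lemma cancel_exp_reverse_array:
  assumes "l < n"
  shows "cancel_exp n c (reverse_array n p) l = int c * (int n - 1) - cancel_exp n c p (n - 1 - l)"
proof -
  define l' where "l' = n - 1 - l"
  have "(\<Sum>i<l. int (reverse_array n p i l)) = (\<Sum>j\<in>{l'<..<n}. int (p l' j))"
    by (rule sum.reindex_bij_witness[where i="\<lambda>j. n - 1 - j" and j="\<lambda>i. n - 1 - i"])
      (use assms in \<open>auto simp: l'_def reverse_array_def\<close>)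
  moreover have "(\<Sum>j\<in>{l<..<n}. int (reverse_array n p l j)) = (\<Sum>i<l'. int (p i l'))"
    by (rule sum.reindex_bij_witness[where i="\<lambda>j. n - 1 - j" and j="\<lambda>i. n - 1 - i"])
      (use assms in \<open>auto simp: l'_def reverse_array_def\<close>)
  moreover have "int l + int l' = int n - 1" using assms by (simp add: l'_def)
  then have "int c * (int n - 1) = int c * int l + int c * int l'"
    by (metis distrib_left)
  ultimately have "cancel_exp n c (reverse_array n p) l = int c * (int n - 1) - cancel_exp n c p l'"
    by (simp add: cancel_exp_def sum.distrib)
  then show ?thesis by (simp add: l'_def)
qed

lemma ct_term_reverse_array:
  "ct_term n c (\<lambda>l x. F (n - 1 - l) (int c * (int n - 1) - x)) (reverse_array n p) = ct_term n c F p"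
proof -
  have "(\<Prod>l<n. F (n - 1 - l) (int c * (int n - 1) - cancel_exp n c (reverse_array n p) l)) =
      (\<Prod>l<n. F (n - 1 - l) (cancel_exp n c p (n - 1 - l)))"
    by (intro prod.cong refl) (simp add: cancel_exp_reverse_array)
  also have "\<dots> = (\<Prod>l<n. F l (cancel_exp n c p l))"
    using prod.nat_diff_reindex[of "\<lambda>l. F l (cancel_exp n c p l)" n] by simp
  finally show ?thesis by (simp add: ct_term_def array_weight_reverse_array)
qed

text \<open>The substitution \<open>x\<^sub>l \<mapsto> 1 / x\<^sub>n\<^sub>-\<^sub>1\<^sub>-\<^sub>l\<close>; it turns \<open>\<Prod>i<j<n. (x\<^sub>j - x\<^sub>i) powi (- c)\<close>
  into itself times \<open>\<Prod>l<n. x\<^sub>l ^ (c * (n - 1))\<close>.\<close>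

lemma ct_reverse: "ct n c F = ct n c (\<lambda>l x. F (n - 1 - l) (int c * (int n - 1) - x))"
proof -
  let ?G = "\<lambda>l x. F (n - 1 - l) (int c * (int n - 1) - x)"
  let ?P = "{p \<in> tri_arrays n. ct_term n c F p \<noteq> 0}"
  have "{p \<in> tri_arrays n. ct_term n c ?G p \<noteq> 0} = reverse_array n ` ?P"
  proof (rule set_eqI, rule iffI)
    fix p assume p: "p \<in> {p \<in> tri_arrays n. ct_term n c ?G p \<noteq> 0}"
    then have "reverse_array n p \<in> ?P"
      using ct_term_reverse_array[where F = F and n = n and c = c and p = "reverse_array n p"]
      by (simp add: reverse_reverse_array reverse_array_in_tri_arrays)
    moreover have "p = reverse_array n (reverse_array n p)"
      using p by (simp add: reverse_reverse_array)
    ultimately show "p \<in> reverse_array n ` ?P" by blast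
  qed (use ct_term_reverse_array[where F = F and n = n and c = c] in
    \<open>auto simp: reverse_array_in_tri_arrays\<close>)
  then have "ct n c ?G = (\<Sum>p\<in>reverse_array n ` ?P. ct_term n c ?G p)"
    by (simp add: ct_def)
  also have "\<dots> = (\<Sum>p\<in>?P. ct_term n c ?G (reverse_array n p))"
  proof (rule sum.reindex_cong[OF _ refl refl])
    show "inj_on (reverse_array n) ?P"
      by (rule inj_on_inverseI[where g = "reverse_array n"]) (simp add: reverse_reverse_array)
  qed
  also have "\<dots> = ct n c F"
    using ct_term_reverse_array[where F = F and n = n and c = c] by (simp add: ct_def)
  finally show ?thesis by (rule sym)
qed

section \<open>Changing the exponents of the factors \<open>1 - x\<^sub>l\<close>\<close>

lemma sum_Box_prod_negbin:
  assumes "\<And>t. K < t \<Longrightarrow> h t = 0"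
  shows "(\<Sum>u\<in>Box m K. (\<Prod>l<m. negbin (M l) (u l)) * h (\<Sum>l<m. u l)) =
         (\<Sum>s\<le>K. negbin (\<Sum>l<m. M l) s * h s)"
  using assms
proof (induction m arbitrary: h)
  case 0
  have "(\<Sum>s\<le>K. negbin 0 s * h s) = (\<Sum>s\<le>K. if s = 0 then h s else 0)"
    by (intro sum.cong refl) (simp add: negbin_0)
  then have "(\<Sum>s\<le>K. negbin 0 s * h s) = h 0"
    by (simp add: sum.delta)
  then show ?case by (simp add: Pi0_0)
next
  case (Suc m)
  let ?M = "\<Sum>l<m. M l"
  have "(\<Sum>u\<in>Box (Suc m) K. (\<Prod>l<Suc m. negbin (M l) (u l)) * h (\<Sum>l<Suc m. u l)) =
      (\<Sum>u\<in>Box m K. \<Sum>v\<le>K. negbin (M m) v * ((\<Prod>l<m. negbin (M l) (u l)) * h ((\<Sum>l<m. u l) + v)))"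
    unfolding sum_Pi0_Suc
  proof (intro sum.cong refl)
    fix u v
    have "(\<Prod>l<m. negbin (M l) ((u(m := v)) l)) = (\<Prod>l<m. negbin (M l) (u l))"
      and "(\<Sum>l<m. (u(m := v)) l) = (\<Sum>l<m. u l)"
      by (auto intro: prod.cong sum.cong)
    then show "(\<Prod>l<Suc m. negbin (M l) ((u(m := v)) l)) * h (\<Sum>l<Suc m. (u(m := v)) l) =
        negbin (M m) v * ((\<Prod>l<m. negbin (M l) (u l)) * h ((\<Sum>l<m. u l) + v))"
      by (simp add: ac_simps)
  qed
  also have "\<dots> = (\<Sum>v\<le>K. negbin (M m) v *
      (\<Sum>u\<in>Box m K. (\<Prod>l<m. negbin (M l) (u l)) * h ((\<Sum>l<m. u l) + v)))"
    by (subst sum.swap) (simp add: sum_distrib_left)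
  also have "\<dots> = (\<Sum>v\<le>K. negbin (M m) v * (\<Sum>s\<le>K. negbin ?M s * h (s + v)))"
    using Suc.IH[of "\<lambda>t. h (t + v)" for v] Suc.prems by simp
  also have "\<dots> = (\<Sum>(v, s)\<in>{..K} \<times> {..K}. negbin (M m) v * negbin ?M s * h (v + s))"
    by (simp add: sum.cartesian_product' sum_distrib_left ac_simps)
  also have "\<dots> = (\<Sum>(v, s)\<in>{(i, j). i + j \<le> K}. negbin (M m) v * negbin ?M s * h (v + s))"
    using Suc.prems by (intro sum.mono_neutral_right) (auto, meson not_le)
  also have "\<dots> = (\<Sum>k\<le>K. negbin (M m + ?M) k * h k)"
    by (simp add: sum.triangle_reindex_eq negbin_add sum_distrib_right)
  finally show ?case by (simp add: add.commute)
qed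

lemma sum_negbin_Bcoeff:
  assumes "- int P - e \<le> int K"
  shows "(\<Sum>s\<le>K. negbin M s * Bcoeff e g (- int P - int s)) =
         (-1) powi (int P + e) * Bcoeff e (int M - int P - 1 - e - g) (- int P)"
proof (cases "e \<le> - int P")
  case True
  define N where "N = nat (- int P - e)"
  have e: "e = - int P - int N" using True by (simp add: N_def)
  have "N \<le> K" using assms by (simp add: N_def)
  define f where "f s = (-1::real) ^ N * (((- of_nat M) gchoose s) * (of_int g gchoose (N - s)))" for s
  have "(\<Sum>s\<le>K. negbin M s * Bcoeff e g (- int P - int s)) =
      (\<Sum>s\<le>N. negbin M s * Bcoeff e g (- int P - int s))"
    using \<open>N \<le> K\<close> by (intro sum.mono_neutral_right) (auto simp: Bcoeff_def e)
  also have "\<dots> = (\<Sum>s\<le>N. f s)"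
  proof (intro sum.cong refl)
    fix s assume s: "s \<in> {..N}"
    then have "(-1::real) ^ N = (-1) ^ s * (-1) ^ (N - s)" by (simp flip: power_add)
    moreover have "nat (- int P - int s - e) = N - s" using s by (simp add: e)
    ultimately show "negbin M s * Bcoeff e g (- int P - int s) = f s"
      using s by (simp add: f_def Bcoeff_def e negbin_def)
  qed
  also have "\<dots> = (-1) ^ N * ((- of_nat M + of_int g) gchoose N)"
    unfolding gbinomial_Vandermonde[symmetric] f_def atLeast0AtMost by (simp add: sum_distrib_left)
  also have "\<dots> = (of_nat N - (- of_nat M + of_int g) - 1) gchoose N"
    by (subst gbinomial_negated_upper) simp
  also have "\<dots> = (-1) powi (int P + e) * Bcoeff e (int M - int P - 1 - e - g) (- int P)"
  proof -
    have arg: "(of_nat N - (- of_nat M + of_int g) - 1 :: real) = of_int (int M - int P - 1 - e - g)"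
      by (simp add: e)
    have sign: "(-1::real) powi (int P + e) = (-1) ^ N"
      by (simp add: e power_int_minus_one_minus)
    have coeff: "Bcoeff e G (- int P) = (-1) ^ N * (of_int G gchoose N)" for G
      using True by (simp add: Bcoeff_def N_def)
    show ?thesis unfolding arg sign coeff by simp
  qed
  finally show ?thesis .
qed (simp add: Bcoeff_def)

lemma sum_Box_negbin_Bcoeff:
  assumes "- int P - e \<le> int K"
  shows "(\<Sum>u\<in>Box m K. (\<Prod>l<m. negbin (M l) (u l)) * Bcoeff e g (- int P - int (\<Sum>l<m. u l))) =
         (-1) powi (int P + e) * Bcoeff e (int (\<Sum>l<m. M l) - int P - 1 - e - g) (- int P)"
proof -
  have "(\<Sum>u\<in>Box m K. (\<Prod>l<m. negbin (M l) (u l)) * Bcoeff e g (- int P - int (\<Sum>l<m. u l))) =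
      (\<Sum>s\<le>K. negbin (\<Sum>l<m. M l) s * Bcoeff e g (- int P - int s))"
    by (rule sum_Box_prod_negbin) (use assms in \<open>simp add: Bcoeff_below\<close>)
  also have "\<dots> = (-1) powi (int P + e) * Bcoeff e (int (\<Sum>l<m. M l) - int P - 1 - e - g) (- int P)"
    using assms by (rule sum_negbin_Bcoeff)
  finally show ?thesis .
qed

lemma sum_Box_shear:
  fixes f :: "(nat \<Rightarrow> nat) \<Rightarrow> (nat \<Rightarrow> nat) \<Rightarrow> 'a::comm_monoid_add"
  assumes below: "\<And>q u l. q \<in> Box m K \<Longrightarrow> u \<in> Box m K \<Longrightarrow> q l < u l \<Longrightarrow> f q u = 0"
    and large: "\<And>q u. K < (\<Sum>l<m. q l) \<Longrightarrow> f q u = 0"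
  shows "(\<Sum>q\<in>Box m K. \<Sum>u\<in>Box m K. f q u) = (\<Sum>q\<in>Box m K. \<Sum>u\<in>Box m K. f (\<lambda>l. q l + u l) u)"
proof -
  let ?B = "Box m K"
  have fin: "finite ?B" by (rule finite_Pi0) simp
  have "(\<Sum>q\<in>?B. \<Sum>u\<in>?B. f q u) = (\<Sum>(q, u)\<in>{(q, u) \<in> ?B \<times> ?B. \<forall>l. u l \<le> q l}. f q u)"
  proof -
    have "u l \<le> q l" if "q \<in> ?B" "u \<in> ?B" "f q u \<noteq> 0" for q u l
      using below[OF that(1,2)] that(3) not_le by blast
    then show ?thesis
      unfolding sum.cartesian_product using fin by (intro sum.mono_neutral_right) auto
  qed
  also have "\<dots> = (\<Sum>(q, u)\<in>{(q, u) \<in> ?B \<times> ?B. (\<lambda>l. q l + u l) \<in> ?B}. f (\<lambda>l. q l + u l) u)"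
    by (rule sum.reindex_bij_witness[where j = "\<lambda>(q, u). (\<lambda>l. q l - u l, u)"
          and i = "\<lambda>(q, u). (\<lambda>l. q l + u l, u)"])
      (auto simp: Pi0_def intro: le_trans[OF diff_le_self])
  also have "\<dots> = (\<Sum>(q, u)\<in>?B \<times> ?B. f (\<lambda>l. q l + u l) u)"
  proof (intro sum.mono_neutral_left ballI)
    fix x assume "x \<in> ?B \<times> ?B - {(q, u) \<in> ?B \<times> ?B. (\<lambda>l. q l + u l) \<in> ?B}"
    then obtain q u where x: "x = (q, u)" "q \<in> ?B" "u \<in> ?B" "(\<lambda>l. q l + u l) \<notin> ?B"
      by auto
    then obtain l where "l < m" "K < q l + u l"
      using not_in_Box_iff[of m "\<lambda>l. q l + u l" K] by (auto simp: Box_outside)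
    moreover have "q l + u l \<le> (\<Sum>l<m. q l + u l)"
      using \<open>l < m\<close> by (intro member_le_sum) auto
    ultimately have "K < (\<Sum>l<m. q l + u l)" by linarith
    then show "(case x of (q, u) \<Rightarrow> f (\<lambda>l. q l + u l) u) = 0"
      by (simp add: x(1) large)
  qed (use fin in auto)
  finally show ?thesis by (simp add: sum.cartesian_product)
qed

lemma ct_Bcoeff_Suc:
  assumes "- e 0 \<le> int K"
  shows "ct (Suc m) c (\<lambda>l. Bcoeff (e l) (g l)) =
    (\<Sum>q\<in>Box m K. (\<Prod>j<m. negbin c (q j)) * Bcoeff (e 0) (g 0) (- int (\<Sum>j<m. q j)) *
       ct m c (\<lambda>l. Bcoeff (e (Suc l) - int c - int (q l)) (g (Suc l))))"
proof -
  have shift: "Bcoeff (e (Suc l)) (g (Suc l)) (x + int c + int (q l)) =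
      Bcoeff (e (Suc l) - int c - int (q l)) (g (Suc l)) x" for l x and q :: "nat \<Rightarrow> nat"
    using Bcoeff_shift[of "e (Suc l)" "g (Suc l)" x "int c + int (q l)"] by (simp add: add.assoc diff_diff_eq)
  show ?thesis
    by (subst ct_Suc[where A = e and K = K, OF assms]) (simp_all add: Bcoeff_below shift)
qed

lemma ct_Bcoeff_binomial_expand:
  assumes "q \<in> Box m K"
  shows "ct m c (\<lambda>l. Bcoeff (e l) (g l + int (q l))) =
    (\<Sum>u\<in>Box m K. (\<Prod>l<m. (-1) ^ u l * of_nat (q l choose u l)) *
       ct m c (\<lambda>l. Bcoeff (e l + int (u l)) (g l)))"
proof -
  have "ct m c (\<lambda>l. Bcoeff (e l) (g l + int (q l))) =
      ct m c (\<lambda>l x. \<Sum>u\<le>K. ((-1) ^ u * of_nat (q l choose u)) * Bcoeff (e l + int u) (g l) x)"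
  proof (rule ct_cong)
    fix l x
    show "Bcoeff (e l) (g l + int (q l)) x =
        (\<Sum>u\<le>K. ((-1) ^ u * of_nat (q l choose u)) * Bcoeff (e l + int u) (g l) x)"
      unfolding Bcoeff_add_expand using Box_le[OF assms, of l]
      by (intro sum.mono_neutral_left) (auto simp: binomial_eq_0)
  qed
  also have "\<dots> = (\<Sum>u\<in>Box m K. (\<Prod>l<m. (-1) ^ u l * of_nat (q l choose u l)) *
       ct m c (\<lambda>l. Bcoeff (e l + int (u l)) (g l)))"
    by (rule ct_sum_expand[where A = e]) (simp add: Bcoeff_def)
  finally show ?thesis .
qed

lemma negbin_shear_weight:
  "(-1) ^ (\<Sum>l<m. q l + u l) * (\<Prod>l<m. negbin c (q l + u l)) *
     (\<Prod>l<m. (-1) ^ u l * of_nat ((q l + u l) choose u l)) =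
   (-1) ^ (\<Sum>l<m. q l) * (\<Prod>l<m. negbin c (q l)) * (\<Prod>l<m. negbin (c + q l) (u l))"
proof -
  have "(-1) ^ (q l + u l) * negbin c (q l + u l) * ((-1) ^ u l * of_nat ((q l + u l) choose u l)) =
      (-1) ^ q l * negbin c (q l) * negbin (c + q l) (u l)" for l
    using negbin_add_mult_binomial[of c "q l" "u l"]
    by (simp add: power_add mult_ac flip: power_mult_distrib)
  then show ?thesis
    by (simp add: power_sum flip: prod.distrib)
qed

lemma sum_Box_sheared_weights:
  assumes "- int (\<Sum>l<m. q l) - e \<le> int K"
  shows "(\<Sum>u\<in>Box m K. Bcoeff e g (- int (\<Sum>l<m. q l + u l)) *
      ((-1) ^ (\<Sum>l<m. q l + u l) * (\<Prod>l<m. negbin c (q l + u l)) *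
       (\<Prod>l<m. (-1) ^ u l * of_nat ((q l + u l) choose u l)))) =
    (-1) powi e * (\<Prod>l<m. negbin c (q l)) * Bcoeff e (int c * int m - 1 - e - g) (- int (\<Sum>l<m. q l))"
proof -
  define P where "P = (\<Sum>l<m. q l)"
  have "(\<Sum>u\<in>Box m K. Bcoeff e g (- int (\<Sum>l<m. q l + u l)) *
      ((-1) ^ (\<Sum>l<m. q l + u l) * (\<Prod>l<m. negbin c (q l + u l)) *
       (\<Prod>l<m. (-1) ^ u l * of_nat ((q l + u l) choose u l)))) =
    (-1) ^ P * (\<Prod>l<m. negbin c (q l)) *
      (\<Sum>u\<in>Box m K. (\<Prod>l<m. negbin (c + q l) (u l)) * Bcoeff e g (- int P - int (\<Sum>l<m. u l)))"
  proof -
    have "- int (\<Sum>l<m. q l + u l) = - int P - int (\<Sum>l<m. u l)" for u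
      by (simp add: P_def sum.distrib)
    then show ?thesis
      unfolding negbin_shear_weight sum_distrib_left
      by (intro sum.cong refl) (simp only: P_def ac_simps)
  qed
  also have "\<dots> = (-1) ^ P * (\<Prod>l<m. negbin c (q l)) *
      ((-1) powi (int P + e) * Bcoeff e (int (\<Sum>l<m. c + q l) - int P - 1 - e - g) (- int P))"
    using assms by (subst sum_Box_negbin_Bcoeff) (simp_all add: P_def)
  also have "int (\<Sum>l<m. c + q l) - int P = int c * int m"
    by (simp add: P_def sum.distrib)
  also have "(-1) ^ P * (\<Prod>l<m. negbin c (q l)) * ((-1) powi (int P + e) * Bcoeff e (int c * int m - 1 - e - g) (- int P)) =
      ((-1) ^ P * (-1) powi (int P + e)) * (\<Prod>l<m. negbin c (q l)) * Bcoeff e (int c * int m - 1 - e - g) (- int P)"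
    by (simp only: ac_simps)
  also have "(-1) ^ P * (-1) powi (int P + e) = (-1 :: real) powi e"
    by (simp add: minus_one_powi_add mult.assoc flip: power_int_of_nat)
  finally show ?thesis by (simp add: P_def)
qed

lemma ct_Bcoeff_Suc_expand:
  assumes IH: "\<And>e g. ct m c (\<lambda>l. Bcoeff (e l) (g l)) =
     (-1) powi (\<Sum>l<m. e l) * (-1) ^ (c * (m choose 2)) *
     ct m c (\<lambda>l. Bcoeff (e l) (int c * (int m - 1) - 1 - e l - g l))"
    and K: "- e 0 \<le> int K"
  shows "ct (Suc m) c (\<lambda>l. Bcoeff (e l) (g l)) =
    (-1) powi (\<Sum>l<m. e (Suc l) - int c) * (-1) ^ (c * (m choose 2)) *
    (\<Sum>q\<in>Box m K. \<Sum>u\<in>Box m K. Bcoeff (e 0) (g 0) (- int (\<Sum>l<m. q l)) *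
       ((-1) ^ (\<Sum>l<m. q l) * (\<Prod>l<m. negbin c (q l)) *
        (\<Prod>l<m. (-1) ^ u l * of_nat (q l choose u l))) *
       ct m c (\<lambda>l. Bcoeff (e (Suc l) - int c - int (q l) + int (u l)) (int c * int m - 1 - e (Suc l) - g (Suc l))))"
proof -
  define E where "E l = e (Suc l) - int c" for l
  define G where "G l = int c * int m - 1 - e (Suc l) - g (Suc l)" for l
  have "ct m c (\<lambda>l. Bcoeff (E l - int (q l)) (g (Suc l))) =
      (-1) powi (\<Sum>l<m. E l) * (-1) ^ (c * (m choose 2)) * (-1) ^ (\<Sum>l<m. q l) *
      (\<Sum>u\<in>Box m K. (\<Prod>l<m. (-1) ^ u l * of_nat (q l choose u l)) *
         ct m c (\<lambda>l. Bcoeff (E l - int (q l) + int (u l)) (G l)))" if "q \<in> Box m K" for q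
  proof -
    have "ct m c (\<lambda>l. Bcoeff (E l - int (q l)) (int c * (int m - 1) - 1 - (E l - int (q l)) - g (Suc l))) =
        ct m c (\<lambda>l. Bcoeff (E l - int (q l)) (G l + int (q l)))"
      by (rule ct_cong) (simp add: E_def G_def algebra_simps)
    moreover have "(-1) powi (\<Sum>l<m. E l - int (q l)) = (-1) powi (\<Sum>l<m. E l) * (-1 :: real) ^ (\<Sum>l<m. q l)"
      by (simp add: sum_subtractf minus_one_powi_diff flip: of_nat_sum)
    ultimately show ?thesis
      using IH[of "\<lambda>l. E l - int (q l)" "\<lambda>l. g (Suc l)"] ct_Bcoeff_binomial_expand[OF that]
      by (simp add: ac_simps)
  qed
  then show ?thesis
    unfolding ct_Bcoeff_Suc[where e = e and K = K, OF K]
    by (simp add: E_def G_def sum_distrib_left ac_simps cong: sum.cong)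
qed

lemma minus_one_powi_transform_Suc:
  "(-1 :: real) powi (\<Sum>l<m. e (Suc l) - int c) * (-1) ^ (c * (m choose 2)) * (-1) powi e 0 =
     (-1) powi (\<Sum>l<Suc m. e l) * (-1) ^ (c * (Suc m choose 2))"
proof -
  have "(-1 :: real) powi (int c * int m) = (-1) ^ (c * m)"
    by (metis of_nat_mult power_int_of_nat)
  then show ?thesis
    by (simp add: sum_subtractf sum.lessThan_Suc_shift Suc_choose_two minus_one_powi_add
        minus_one_powi_diff distrib_left power_add ac_simps del: sum.lessThan_Suc)
qed

text \<open>The double sum over \<open>(q, u)\<close> is resummed over \<open>(q - u, u)\<close>; the inner sum over \<open>u\<close>
  then collapses by Vandermonde's identity.\<close>

lemma ct_Bcoeff_transform_Suc:
  assumes IH: "\<And>e g. ct m c (\<lambda>l. Bcoeff (e l) (g l)) =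
     (-1) powi (\<Sum>l<m. e l) * (-1) ^ (c * (m choose 2)) *
     ct m c (\<lambda>l. Bcoeff (e l) (int c * (int m - 1) - 1 - e l - g l))"
  shows "ct (Suc m) c (\<lambda>l. Bcoeff (e l) (g l)) =
     (-1) powi (\<Sum>l<Suc m. e l) * (-1) ^ (c * (Suc m choose 2)) *
     ct (Suc m) c (\<lambda>l. Bcoeff (e l) (int c * int m - 1 - e l - g l))"
proof -
  define K where "K = nat (- e 0)"
  have K: "- e 0 \<le> int K" by (simp add: K_def)
  define \<Phi> where "\<Phi> q = ct m c (\<lambda>l. Bcoeff (e (Suc l) - int c - int (q l))
      (int c * int m - 1 - e (Suc l) - g (Suc l)))" for q :: "nat \<Rightarrow> nat"
  define f where "f q u = Bcoeff (e 0) (g 0) (- int (\<Sum>l<m. q l)) *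
      ((-1) ^ (\<Sum>l<m. q l) * (\<Prod>l<m. negbin c (q l)) * (\<Prod>l<m. (-1) ^ u l * of_nat (q l choose u l))) *
      ct m c (\<lambda>l. Bcoeff (e (Suc l) - int c - int (q l) + int (u l)) (int c * int m - 1 - e (Suc l) - g (Suc l)))"
    for q u :: "nat \<Rightarrow> nat"
  let ?B = "Box m K"
  have "(\<Sum>q\<in>?B. \<Sum>u\<in>?B. f q u) = (\<Sum>q\<in>?B. \<Sum>u\<in>?B. f (\<lambda>l. q l + u l) u)"
  proof (rule sum_Box_shear)
    fix q u l assume "q \<in> ?B" "u \<in> ?B" "q l < u l"
    then have "l < m" using Box_outside by (metis not_le not_less_zero)
    then have "(\<Prod>l<m. (-1::real) ^ u l * of_nat (q l choose u l)) = 0"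
      using \<open>q l < u l\<close> by (intro prod_zero) (auto simp: binomial_eq_0)
    then show "f q u = 0" by (simp add: f_def)
  next
    fix q u :: "nat \<Rightarrow> nat" assume "K < (\<Sum>l<m. q l)"
    then have "- int (\<Sum>l<m. q l) < e 0" using K by linarith
    then show "f q u = 0" by (simp add: f_def Bcoeff_below)
  qed
  also have "\<dots> = (\<Sum>q\<in>?B. (-1) powi e 0 * (\<Prod>l<m. negbin c (q l)) *
      Bcoeff (e 0) (int c * int m - 1 - e 0 - g 0) (- int (\<Sum>l<m. q l)) * \<Phi> q)"
  proof (intro sum.cong refl)
    fix q assume "q \<in> ?B"
    then have "- int (\<Sum>l<m. q l) - e 0 \<le> int K" using K by linarith
    moreover have "f (\<lambda>l. q l + u l) u = Bcoeff (e 0) (g 0) (- int (\<Sum>l<m. q l + u l)) *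
        ((-1) ^ (\<Sum>l<m. q l + u l) * (\<Prod>l<m. negbin c (q l + u l)) *
         (\<Prod>l<m. (-1) ^ u l * of_nat ((q l + u l) choose u l))) * \<Phi> q" for u
    proof -
      have "e (Suc l) - int c - int (q l + u l) + int (u l) = e (Suc l) - int c - int (q l)" for l
        by simp
      then show ?thesis by (simp only: f_def \<Phi>_def)
    qed
    ultimately show "(\<Sum>u\<in>?B. f (\<lambda>l. q l + u l) u) = (-1) powi e 0 * (\<Prod>l<m. negbin c (q l)) *
        Bcoeff (e 0) (int c * int m - 1 - e 0 - g 0) (- int (\<Sum>l<m. q l)) * \<Phi> q"
      by (simp add: sum_distrib_right[symmetric] sum_Box_sheared_weights del: of_nat_sum)
  qed
  also have "\<dots> = (-1) powi e 0 * ct (Suc m) c (\<lambda>l. Bcoeff (e l) (int c * int m - 1 - e l - g l))"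
    unfolding ct_Bcoeff_Suc[where e = e and K = K, OF K]
    by (simp add: \<Phi>_def sum_distrib_left ac_simps)
  finally have "(\<Sum>q\<in>?B. \<Sum>u\<in>?B. f q u) =
      (-1) powi e 0 * ct (Suc m) c (\<lambda>l. Bcoeff (e l) (int c * int m - 1 - e l - g l))" .
  then show ?thesis
    unfolding ct_Bcoeff_Suc_expand[where e = e and g = g and K = K, OF IH K, folded f_def]
      minus_one_powi_transform_Suc[symmetric]
    by (simp only: mult_ac)
qed

theorem ct_Bcoeff_transform:
  "ct n c (\<lambda>l. Bcoeff (e l) (g l)) =
     (-1) powi (\<Sum>l<n. e l) * (-1) ^ (c * (n choose 2)) *
     ct n c (\<lambda>l. Bcoeff (e l) (int c * (int n - 1) - 1 - e l - g l))"
proof (induction n arbitrary: e g)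
  case (Suc m)
  have "int (Suc m) - 1 = int m" by simp
  then show ?case using ct_Bcoeff_transform_Suc[of m c e g, OF Suc.IH] by (simp only:)
qed (simp add: ct_0 numeral_2_eq_2)

section \<open>The duality for \<open>Psi\<close>\<close>

lemma Psi_terms_eq:
  fixes n k c :: nat and a :: int
  defines "N \<equiv> \<lambda>p l. nat (cancel_exp n c p l + a - 1)"
  shows "Psi_terms n k a c = (\<lambda>(p, s). (\<lambda>l. if l < n then N p l - s l else 0, s, p)) `
    (SIGMA p:bounded_arrays n c (\<lambda>_. 1 - a).
       {s \<in> Pi0 n (\<lambda>l. {..N p l}). card {l \<in> {..<n}. 0 < s l} = k})"
    (is "_ = ?f ` ?D")
proof (rule set_eqI, rule iffI)
  fix x assume "x \<in> Psi_terms n k a c"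
  then obtain r s p where x_eq: "x = (r, s, p)"
    and outside: "\<forall>i. n \<le> i \<longrightarrow> r i = 0 \<and> s i = 0" and p_tri: "p \<in> tri_arrays n"
    and card: "card {l \<in> {..<n}. 0 < s l} = k"
    and balance: "\<forall>l<n. 1 - a + int (r l) + int (s l) + (\<Sum>j\<in>{l<..<n}. int (p l j))
              - (\<Sum>i<l. int c + int (p i l)) = 0"
    unfolding Psi_terms_def tri_arrays_def by blast
  have eq: "int (r l) + int (s l) = cancel_exp n c p l + a - 1" if "l < n" for l
    using balance that unfolding cancel_exp_def by auto
  have "p \<in> bounded_arrays n c (\<lambda>_. 1 - a)"
    using p_tri eq by (fastforce simp: bounded_arrays_def)
  moreover have "s \<in> Pi0 n (\<lambda>l. {..N p l})"
    using eq outside by (fastforce simp: Pi0_def N_def)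
  moreover have "r = (\<lambda>l. if l < n then N p l - s l else 0)"
    using eq outside by (fastforce simp: N_def)
  ultimately show "x \<in> ?f ` ?D"
    using card by (auto simp: x_eq image_iff)
next
  fix x assume "x \<in> ?f ` ?D"
  then obtain p s where x_eq: "x = (\<lambda>l. if l < n then N p l - s l else 0, s, p)"
    and p: "p \<in> bounded_arrays n c (\<lambda>_. 1 - a)" and s: "s \<in> Pi0 n (\<lambda>l. {..N p l})"
    and card: "card {l \<in> {..<n}. 0 < s l} = k" by auto
  have "int (N p l - s l) + int (s l) = cancel_exp n c p l + a - 1" if "l < n" for l
    using p s that by (auto simp: bounded_arrays_def Pi0_def N_def of_nat_diff)
  then show "x \<in> Psi_terms n k a c"
    using p s card unfolding Psi_terms_def bounded_arrays_def tri_arrays_def Pi0_def cancel_exp_def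
    by (auto simp: x_eq)
qed

lemma sum_Pi0_card_support:
  fixes f :: "nat \<Rightarrow> nat \<Rightarrow> 'a::comm_semiring_1"
  shows "(\<Sum>s\<in>{s \<in> Pi0 n (\<lambda>l. {..N l}). card {l \<in> {..<n}. 0 < s l} = k}. \<Prod>l<n. f l (s l)) =
    (\<Sum>S | S \<subseteq> {..<n} \<and> card S = k. \<Prod>l<n. if l \<in> S then (\<Sum>v\<in>{1..N l}. f l v) else f l 0)"
proof -
  define X where "X S l = (if l \<in> S then {1..N l} else {0})" for S and l :: nat
  let ?SS = "{S. S \<subseteq> {..<n} \<and> card S = k}"
  have support: "{l \<in> {..<n}. 0 < s l} = S" if "S \<subseteq> {..<n}" "s \<in> Pi0 n (X S)" for S s
    using that by (force simp: Pi0_def X_def split: if_splits)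
  have "{s \<in> Pi0 n (\<lambda>l. {..N l}). card {l \<in> {..<n}. 0 < s l} = k} = (\<Union>S\<in>?SS. Pi0 n (X S))"
  proof (rule set_eqI, rule iffI)
    fix s assume s: "s \<in> {s \<in> Pi0 n (\<lambda>l. {..N l}). card {l \<in> {..<n}. 0 < s l} = k}"
    then have "s \<in> Pi0 n (X {l \<in> {..<n}. 0 < s l})"
      by (auto simp: Pi0_def X_def)
    then show "s \<in> (\<Union>S\<in>?SS. Pi0 n (X S))"
      using s by (intro UN_I[of "{l \<in> {..<n}. 0 < s l}"]) auto
  next
    fix s assume "s \<in> (\<Union>S\<in>?SS. Pi0 n (X S))"
    then obtain S where S: "S \<subseteq> {..<n}" "card S = k" and s: "s \<in> Pi0 n (X S)" by auto
    then show "s \<in> {s \<in> Pi0 n (\<lambda>l. {..N l}). card {l \<in> {..<n}. 0 < s l} = k}"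
      using support[OF S(1) s] by (auto simp: Pi0_def X_def split: if_splits)
  qed
  moreover have "(\<Sum>s\<in>(\<Union>S\<in>?SS. Pi0 n (X S)). \<Prod>l<n. f l (s l)) =
      (\<Sum>S\<in>?SS. \<Sum>s\<in>Pi0 n (X S). \<Prod>l<n. f l (s l))"
  proof (rule sum.UNION_disjoint)
    show "finite ?SS" by (rule finite_subset[of _ "Pow {..<n}"]) auto
    show "\<forall>S\<in>?SS. finite (Pi0 n (X S))" by (auto intro!: finite_Pi0 simp: X_def)
    show "\<forall>S\<in>?SS. \<forall>S'\<in>?SS. S \<noteq> S' \<longrightarrow> Pi0 n (X S) \<inter> Pi0 n (X S') = {}"
      using support by blast
  qed
  moreover have "(\<Sum>s\<in>Pi0 n (X S). \<Prod>l<n. f l (s l)) =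
      (\<Prod>l<n. if l \<in> S then (\<Sum>v\<in>{1..N l}. f l v) else f l 0)" for S
    by (simp add: sum_prod_Pi0 X_def if_distrib cong: if_cong)
  ultimately show ?thesis by simp
qed

lemma Psi_eq_sum_ct:
  "Psi n k a b c = (\<Sum>S | S \<subseteq> {..<n} \<and> card S = k.
      ct n c (\<lambda>l. if l \<in> S then Bcoeff (2 - a) (- b - 1) else Bcoeff (1 - a) (- b)))"
proof -
  let ?N = "\<lambda>p l. nat (cancel_exp n c p l + a - 1)"
  let ?D = "bounded_arrays n c (\<lambda>_. 1 - a)"
  let ?T = "\<lambda>p. {s \<in> Pi0 n (\<lambda>l. {..?N p l}). card {l \<in> {..<n}. 0 < s l} = k}"
  let ?SS = "{S. S \<subseteq> {..<n} \<and> card S = k}"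
  let ?F = "\<lambda>S l. if l \<in> S then Bcoeff (2 - a) (- b - 1) else Bcoeff (1 - a) (- b)"
  have inj: "inj_on (\<lambda>(p, s). (\<lambda>l. if l < n then ?N p l - s l else 0, s, p)) (Sigma ?D ?T)"
    by (auto simp: inj_on_def)
  have fin_T: "finite (?T p)" for p
    by (auto intro: finite_subset[OF _ finite_Pi0[of n "\<lambda>l. {..?N p l}"]])
  have "Psi n k a b c = (\<Sum>(p, s)\<in>Sigma ?D ?T. array_weight n c p * (\<Prod>l<n. Bcoeff 0 (- b) (int (?N p l - s l))))"
    unfolding Psi_def Psi_terms_eq sum.reindex[OF inj]
    by (intro sum.cong refl) (auto simp: array_weight_def negbin_def Bcoeff_def mult.commute)
  also have "\<dots> = (\<Sum>p\<in>?D. array_weight n c p * (\<Sum>s\<in>?T p. \<Prod>l<n. Bcoeff 0 (- b) (int (?N p l - s l))))"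
    using fin_T by (subst sum.Sigma[symmetric]) (auto simp: finite_bounded_arrays sum_distrib_left)
  also have "\<dots> = (\<Sum>p\<in>?D. array_weight n c p * (\<Sum>S\<in>?SS. \<Prod>l<n. ?F S l (cancel_exp n c p l)))"
  proof (intro sum.cong refl arg_cong[where f = "\<lambda>x. _ * x"])
    fix p assume p: "p \<in> ?D"
    have "(\<Sum>v\<in>{1..?N p l}. Bcoeff 0 (- b) (int (?N p l - v))) = Bcoeff (2 - a) (- b - 1) (cancel_exp n c p l)"
      and "Bcoeff 0 (- b) (int (?N p l - 0)) = Bcoeff (1 - a) (- b) (cancel_exp n c p l)" if "l < n" for l
    proof -
      have "1 - a \<le> cancel_exp n c p l" using p that by (simp add: bounded_arrays_def)
      then have x: "0 \<le> cancel_exp n c p l + a - 1" by linarith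
      have "(\<Sum>v\<in>{1..?N p l}. Bcoeff 0 (- b) (int (?N p l - v))) =
          (\<Sum>v\<in>{1..?N p l}. Bcoeff 0 (- b) (cancel_exp n c p l + a - 1 - int v))"
        using x by (intro sum.cong refl) (auto simp: of_nat_diff)
      also have "\<dots> = Bcoeff 1 (- b - 1) (cancel_exp n c p l + a - 1)"
        using Bcoeff_geometric[OF x, of "- b"] by simp
      finally show "(\<Sum>v\<in>{1..?N p l}. Bcoeff 0 (- b) (int (?N p l - v))) =
          Bcoeff (2 - a) (- b - 1) (cancel_exp n c p l)"
        using Bcoeff_shift[of 1 "- b - 1" "cancel_exp n c p l" "a - 1"] by (simp add: algebra_simps)
      show "Bcoeff 0 (- b) (int (?N p l - 0)) = Bcoeff (1 - a) (- b) (cancel_exp n c p l)"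
        using x Bcoeff_shift[of 0 "- b" "cancel_exp n c p l" "a - 1"] by (simp add: algebra_simps)
    qed
    then show "(\<Sum>s\<in>?T p. \<Prod>l<n. Bcoeff 0 (- b) (int (?N p l - s l))) =
        (\<Sum>S\<in>?SS. \<Prod>l<n. ?F S l (cancel_exp n c p l))"
      unfolding sum_Pi0_card_support[where f = "\<lambda>l v. Bcoeff 0 (- b) (int (?N p l - v))"]
      by (intro sum.cong refl prod.cong) auto
  qed
  also have "\<dots> = (\<Sum>S\<in>?SS. \<Sum>p\<in>?D. ct_term n c (?F S) p)"
    by (subst sum.swap) (simp add: ct_term_def sum_distrib_left)
  also have "\<dots> = (\<Sum>S\<in>?SS. ct n c (?F S))"
    by (intro sum.cong refl ct_eq_sum_bounded_arrays[symmetric]) (auto simp: Bcoeff_def)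
  finally show ?thesis by simp
qed

definition refl_compl :: "nat \<Rightarrow> nat set \<Rightarrow> nat set" where
  "refl_compl n S = {..<n} - (\<lambda>l. n - 1 - l) ` S"

lemma refl_compl_subset: "refl_compl n S \<subseteq> {..<n}"
  by (auto simp: refl_compl_def)

lemma mem_refl_compl:
  assumes "S \<subseteq> {..<n}" and "l < n"
  shows "l \<in> refl_compl n S \<longleftrightarrow> n - 1 - l \<notin> S"
proof -
  have "l \<in> (\<lambda>l. n - 1 - l) ` S \<longleftrightarrow> n - 1 - l \<in> S"
  proof
    assume "l \<in> (\<lambda>l. n - 1 - l) ` S"
    then obtain j where "j \<in> S" "l = n - 1 - j" by auto
    moreover have "j < n" using \<open>j \<in> S\<close> assms(1) by auto
    ultimately show "n - 1 - l \<in> S" by (simp add: diff_diff_cancel)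
  next
    assume "n - 1 - l \<in> S"
    moreover have "l = n - 1 - (n - 1 - l)" using assms(2) by simp
    ultimately show "l \<in> (\<lambda>l. n - 1 - l) ` S" by blast
  qed
  then show ?thesis using assms(2) by (simp add: refl_compl_def)
qed

lemma refl_compl_refl_compl:
  assumes "S \<subseteq> {..<n}"
  shows "refl_compl n (refl_compl n S) = S"
proof (rule set_eqI)
  fix l
  show "l \<in> refl_compl n (refl_compl n S) \<longleftrightarrow> l \<in> S"
  proof (cases "l < n")
    case True
    then have "n - 1 - l < n" "n - 1 - (n - 1 - l) = l" by auto
    then show ?thesis
      using mem_refl_compl[OF refl_compl_subset[of n S] True] mem_refl_compl[OF assms \<open>n - 1 - l < n\<close>]
      by simp
  qed (use assms refl_compl_subset in blast)
qed

lemma card_refl_compl: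
  assumes "S \<subseteq> {..<n}"
  shows "card (refl_compl n S) = n - card S"
proof -
  have "inj_on (\<lambda>l. n - 1 - l) S"
  proof (rule inj_onI)
    fix x y assume "x \<in> S" "y \<in> S" "n - 1 - x = n - 1 - y"
    moreover have "x < n" "y < n" using \<open>x \<in> S\<close> \<open>y \<in> S\<close> assms by auto
    ultimately show "x = y" by arith
  qed
  then have "card ((\<lambda>l. n - 1 - l) ` S) = card S" by (rule card_image)
  moreover have "(\<lambda>l. n - 1 - l) ` S \<subseteq> {..<n}" using assms by auto
  ultimately show ?thesis
    by (simp add: refl_compl_def card_Diff_subset finite_subset[OF _ finite_lessThan])
qed

lemma sum_if_mem:
  fixes x y :: "'a::comm_ring_1"
  assumes "S \<subseteq> {..<n}"
  shows "(\<Sum>l<n. if l \<in> S then x else y) = of_nat (card S) * x + of_nat (n - card S) * y"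
proof -
  have "finite S" using assms finite_subset by blast
  have "{..<n} \<inter> S = S" "{..<n} \<inter> - S = {..<n} - S" using assms by auto
  moreover have "card ({..<n} - S) = n - card S" using assms \<open>finite S\<close> by (simp add: card_Diff_subset)
  ultimately show ?thesis
    by (simp add: sum.If_cases[of "{..<n}" "\<lambda>l. l \<in> S", simplified])
qed

lemma ct_Bcoeff_transform_uniform:
  assumes "\<And>l. l < n \<Longrightarrow> int c * (int n - 1) - 1 - e l - g l = D"
  shows "ct n c (\<lambda>l. Bcoeff (e l) (g l)) =
    (-1) powi (\<Sum>l<n. e l) * (-1) ^ (c * (n choose 2)) * ct n c (\<lambda>l. Bcoeff (e l) D)"
  unfolding ct_Bcoeff_transform[of n c e g] using assms by (simp cong: ct_cong)

lemma ct_Bcoeff_reverse: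
  "ct n c (\<lambda>l. Bcoeff (e l) (int d)) =
    (-1) ^ (d * n) * ct n c (\<lambda>l. Bcoeff (int c * (int n - 1) - e (n - 1 - l) - int d) (int d))"
proof -
  have "ct n c (\<lambda>l. Bcoeff (e l) (int d)) =
      ct n c (\<lambda>l x. (-1) ^ d * Bcoeff (int c * (int n - 1) - e (n - 1 - l) - int d) (int d) x)"
    by (subst ct_reverse) (simp add: Bcoeff_reflect)
  then show ?thesis by (simp add: ct_scale power_mult)
qed

lemma ct_summand_dual:
  fixes a b :: int
  assumes "0 < a" "0 < b" "0 < n" and S: "S \<subseteq> {..<n}"
  shows "ct n c (\<lambda>l. if l \<in> S then Bcoeff (2 - a) (- b - 1) else Bcoeff (1 - a) (- b)) =
    ct n c (\<lambda>l. if l \<in> refl_compl n S then Bcoeff (2 - (b + 1)) (- (a - 1) - 1)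
                 else Bcoeff (1 - (b + 1)) (- (a - 1)))"
proof -
  define d where "d = nat (int c * (int n - 1) + a + b - 2)"
  have "0 \<le> int c * (int n - 1)" using assms by simp
  then have "2 \<le> int c * (int n - 1) + a + b" using assms by linarith
  then have d: "int d = int c * (int n - 1) + a + b - 2" by (simp add: d_def)
  define eL where "eL l = (if l \<in> S then 2 - a else 1 - a)" for l
  define eR where "eR l = (if l \<in> refl_compl n S then 1 - b else - b)" for l
  define \<epsilon> where "\<epsilon> = (-1 :: real) ^ (c * (n choose 2))"
  have L: "ct n c (\<lambda>l. if l \<in> S then Bcoeff (2 - a) (- b - 1) else Bcoeff (1 - a) (- b)) =
      (-1) powi (\<Sum>l<n. eL l) * \<epsilon> * ct n c (\<lambda>l. Bcoeff (eL l) (int d))"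
  proof -
    have "ct n c (\<lambda>l. if l \<in> S then Bcoeff (2 - a) (- b - 1) else Bcoeff (1 - a) (- b)) =
        ct n c (\<lambda>l. Bcoeff (eL l) (if l \<in> S then - b - 1 else - b))"
      by (rule ct_cong) (simp add: eL_def)
    also have "\<dots> = (-1) powi (\<Sum>l<n. eL l) * \<epsilon> * ct n c (\<lambda>l. Bcoeff (eL l) (int d))"
      unfolding \<epsilon>_def by (rule ct_Bcoeff_transform_uniform) (simp add: eL_def d)
    finally show ?thesis .
  qed
  have R: "ct n c (\<lambda>l. if l \<in> refl_compl n S then Bcoeff (2 - (b + 1)) (- (a - 1) - 1)
                 else Bcoeff (1 - (b + 1)) (- (a - 1))) =
      (-1) powi (\<Sum>l<n. eR l) * \<epsilon> * ct n c (\<lambda>l. Bcoeff (eR l) (int d))"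
  proof -
    have "ct n c (\<lambda>l. if l \<in> refl_compl n S then Bcoeff (2 - (b + 1)) (- (a - 1) - 1)
        else Bcoeff (1 - (b + 1)) (- (a - 1))) =
        ct n c (\<lambda>l. Bcoeff (eR l) (if l \<in> refl_compl n S then - a else 1 - a))"
      by (rule ct_cong) (simp add: eR_def)
    also have "\<dots> = (-1) powi (\<Sum>l<n. eR l) * \<epsilon> * ct n c (\<lambda>l. Bcoeff (eR l) (int d))"
      unfolding \<epsilon>_def by (rule ct_Bcoeff_transform_uniform) (simp add: eR_def d)
    finally show ?thesis .
  qed
  have M: "ct n c (\<lambda>l. Bcoeff (eL l) (int d)) = (-1) ^ (d * n) * ct n c (\<lambda>l. Bcoeff (eR l) (int d))"
  proof -
    have "ct n c (\<lambda>l. Bcoeff (int c * (int n - 1) - eL (n - 1 - l) - int d) (int d)) =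
        ct n c (\<lambda>l. Bcoeff (eR l) (int d))"
      by (rule ct_cong) (simp add: mem_refl_compl[OF S] eL_def eR_def d)
    then show ?thesis
      using ct_Bcoeff_reverse[where n = n and c = c and e = eL and d = d] by simp
  qed
  have "card S \<le> n" using S by (metis card_lessThan card_mono finite_lessThan)
  then have "even ((\<Sum>l<n. eL l) + int (d * n) - (\<Sum>l<n. eR l))"
    unfolding eL_def eR_def sum_if_mem[OF S] sum_if_mem[OF refl_compl_subset] card_refl_compl[OF S]
    by (simp add: d of_nat_diff algebra_simps)
  then have "(-1 :: real) powi ((\<Sum>l<n. eL l) + int (d * n)) = (-1) powi (\<Sum>l<n. eR l)"
    by (rule minus_one_powi_eq)
  then have sign: "(-1) powi (\<Sum>l<n. eL l) * (-1) ^ (d * n) = (-1 :: real) powi (\<Sum>l<n. eR l)"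
    by (simp only: minus_one_powi_add power_int_of_nat)
  show ?thesis
    unfolding L M R sign[symmetric] by (simp only: mult_ac)
qed

theorem proposition5p14:
  fixes a b :: int and n c k :: nat
  assumes "a > 0" and "b > 0" and "n > 0" and "k \<le> n"
  shows "Psi n k a b c = Psi n (n - k) (b + 1) (a - 1) c"
proof -
  have "Psi n k a b c = (\<Sum>S | S \<subseteq> {..<n} \<and> card S = k.
      ct n c (\<lambda>l. if l \<in> S then Bcoeff (2 - a) (- b - 1) else Bcoeff (1 - a) (- b)))"
    by (rule Psi_eq_sum_ct)
  also have "\<dots> = (\<Sum>S | S \<subseteq> {..<n} \<and> card S = k.
      ct n c (\<lambda>l. if l \<in> refl_compl n S then Bcoeff (2 - (b + 1)) (- (a - 1) - 1)
                   else Bcoeff (1 - (b + 1)) (- (a - 1))))"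
    using assms by (intro sum.cong refl ct_summand_dual) auto
  also have "\<dots> = (\<Sum>S | S \<subseteq> {..<n} \<and> card S = n - k.
      ct n c (\<lambda>l. if l \<in> S then Bcoeff (2 - (b + 1)) (- (a - 1) - 1) else Bcoeff (1 - (b + 1)) (- (a - 1))))"
    by (rule sum.reindex_bij_witness[where i = "refl_compl n" and j = "refl_compl n"])
      (use assms(4) in \<open>auto simp: refl_compl_refl_compl refl_compl_subset card_refl_compl\<close>)
  also have "\<dots> = Psi n (n - k) (b + 1) (a - 1) c"
    by (rule Psi_eq_sum_ct[symmetric])
  finally show ?thesis .
qed

end
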